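(* Let $\mathcal{M}$ be a rich set of quantum measurements, and let $\succeq$ be a likelihood ordering on $\mathcal{M}$ that is minimally rational and satisfies equivalence. Then $\succeq$ is uniquely represented by the function $\Pr(E\mid M)=\mathcal{W}_M(E)$ (for $M\in\mathcal{M}$, $E\subseteq\mathcal{S}_M$); that is, this function represents $\succeq$, and it is the only function that does.
   Context: A quantum measurement $M$ consists of: a Hilbert space $\mathcal{H}$; a normalised vector $|\psi\rangle\in\mathcal{H}$; a self-adjoint operator $\hat X$ on $\mathcal{H}$ with discrete spectrum $\sigma(\hat X)$, with $\hat P_X(x)$ the projection onto the eigenspace of eigenvalue $x$; a set $\mathcal{S}_M$ (the possible outcomes, or state space) whose subsets are called events; and a function $\mathcal{C}:\mathcal{S}_M\to\sigma(\hat X)$ onto $\sigma(\hat X)$, with $\mathcal{C}(E)=\{\mathcal{C}(s): s\in E\}$. The weight of an event $E\subseteq\mathcal{S}_M$ is $\mathcal{W}_M(E)=\sum_{x\in\mathcal{C}(E)}\langle\psi|\hat P_X(x)|\psi\rangle$. A set $\mathcal{M}$ of quantum measurements is rich if for every $n$ and all positive reals $w_1,\dots,w_n$ with $\sum_{i=1}^n w_i=1$, $\mathcal{M}$ contains a measurement with exactly $n$ outcomes whose singleton events have weights $w_1,\dots,w_n$. A likelihood ordering on $\mathcal{M}$ is a binary relation $\succeq$ on the pairs $\langle E,M\rangle$ with $M\in\mathcal{M}$ and $E\subseteq\mathcal{S}_M$, written $E|M\succeq F|N$. Write $E|M\simeq F|N$ if $E|M\succeq F|N$ and $F|N\succeq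 E|M$. $E|M$ is null if $E|M\simeq\emptyset|M$. The ordering is minimally rational if: (Transitivity) $E|M\succeq F|N$ and $F|N\succeq G|O$ imply $E|M\succeq G|O$; (Separation) there exist $M$ and $E$ with $E|M$ not null; (Dominance) if $E\subseteq F\subseteq\mathcal{S}_M$ then $F|M\succeq E|M$, and $F|M\simeq E|M$ iff $(F\setminus E)|M$ is null. The ordering satisfies equivalence if $\mathcal{W}_M(E)=\mathcal{W}_N(F)$ implies $E|M\simeq F|N$. A function $\Pr$ assigning a real number $\Pr(E|M)$ to each pair represents $\succeq$ if: $\Pr(\emptyset|M)=0$ and $\Pr(\mathcal{S}_M|M)=1$ for all $M$; $\Pr(E\cup F|M)=\Pr(E|M)+\Pr(F|M)$ for disjoint $E,F\subseteq\mathcal{S}_M$; and $\Pr(E|M)\ge\Pr(F|N)$ iff $E|M\succeq F|N$. It is uniquely represented if exactly one such function exists. *)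

theory Defs
  imports "HOL-Analysis.Analysis"
begin

text \<open>Complex vector spaces with a complex inner product (physics convention:
  antilinear in the first argument, linear in the second).  Hilbert spaces of
  individual measurements are closed complex subspaces of an ambient complete
  complex inner product space of type 'h.\<close>

class cvector = real_vector +
  fixes scaleC :: "complex \<Rightarrow> 'a \<Rightarrow> 'a"
  assumes scaleC_add_right: "scaleC a (x + y) = scaleC a x + scaleC a y"
    and scaleC_add_left: "scaleC (a + b) x = scaleC a x + scaleC b x"
    and scaleC_scaleC: "scaleC a (scaleC b x) = scaleC (a * b) x"
    and scaleC_one: "scaleC 1 x = x"
    and scaleR_scaleC: "scaleR r x = scaleC (complex_of_real r) x"

class cinner_space = cvector + real_normed_vector +
  fixes cinner :: "'a \<Rightarrow> 'a \<Rightarrow> complex"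
  assumes cinner_commute: "cinner x y = cnj (cinner y x)"
    and cinner_add_right: "cinner x (y + z) = cinner x y + cinner x z"
    and cinner_scaleC_right: "cinner x (scaleC c y) = c * cinner x y"
    and cinner_nonneg: "Im (cinner x x) = 0 \<and> 0 \<le> Re (cinner x x)"
    and cinner_eq_zero_iff: "cinner x x = 0 \<longleftrightarrow> x = 0"
    and norm_eq_sqrt_cinner: "norm x = sqrt (Re (cinner x x))"

definition csubspace :: "'h::cinner_space set \<Rightarrow> bool" where
  "csubspace K \<longleftrightarrow> 0 \<in> K \<and> (\<forall>x\<in>K. \<forall>y\<in>K. x + y \<in> K) \<and> (\<forall>c. \<forall>x\<in>K. scaleC c x \<in> K)"

definition hilbert_subspace :: "'h::{cinner_space,complete_space} set \<Rightarrow> bool" where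
  "hilbert_subspace K \<longleftrightarrow> csubspace K \<and> closed K"

definition cspan :: "'h::cinner_space set \<Rightarrow> 'h set" where
  "cspan A = {y. \<exists>F c. finite F \<and> F \<subseteq> A \<and> y = (\<Sum>v\<in>F. scaleC (c v) v)}"

definition proj :: "'h::cinner_space set \<Rightarrow> 'h \<Rightarrow> 'h" where
  "proj K v = (THE k. k \<in> K \<and> (\<forall>u\<in>K. cinner u (v - k) = 0))"

definition self_adjoint :: "'h::cinner_space set \<Rightarrow> 'h set \<Rightarrow> ('h \<Rightarrow> 'h) \<Rightarrow> bool" where
  "self_adjoint H D X \<longleftrightarrow>
     csubspace D \<and> D \<subseteq> H \<and> H \<subseteq> closure D \<and> X ` D \<subseteq> H \<and>
     (\<forall>u\<in>D. \<forall>v\<in>D. X (u + v) = X u + X v) \<and>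
     (\<forall>c. \<forall>u\<in>D. X (scaleC c u) = scaleC c (X u)) \<and>
     (\<forall>u\<in>D. \<forall>v\<in>D. cinner (X u) v = cinner u (X v)) \<and>
     (\<forall>v\<in>H. (\<exists>w\<in>H. \<forall>u\<in>D. cinner (X u) v = cinner u w) \<longrightarrow> v \<in> D)"

definition eigenspace :: "'h::cinner_space set \<Rightarrow> ('h \<Rightarrow> 'h) \<Rightarrow> real \<Rightarrow> 'h set" where
  "eigenspace D X x = {v \<in> D. X v = scaleC (complex_of_real x) v}"

text \<open>Spectrum of an operator with discrete (pure point) spectrum: its eigenvalues.\<close>
definition point_spectrum :: "'h::cinner_space set \<Rightarrow> ('h \<Rightarrow> 'h) \<Rightarrow> real set" where
  "point_spectrum D X = {x. eigenspace D X x \<noteq> {0}}"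

definition discrete_spectrum :: "'h::cinner_space set \<Rightarrow> 'h set \<Rightarrow> ('h \<Rightarrow> 'h) \<Rightarrow> bool" where
  "discrete_spectrum H D X \<longleftrightarrow>
     H \<subseteq> closure (cspan (\<Union>x\<in>point_spectrum D X. eigenspace D X x))"

record ('h, 's) qmeas =
  hspace :: "'h set"
  state :: "'h"
  odom :: "'h set"
  obs :: "'h \<Rightarrow> 'h"
  outcomes :: "'s set"
  cg :: "'s \<Rightarrow> real"

definition spec :: "('h::cinner_space, 's) qmeas \<Rightarrow> real set" where
  "spec M = point_spectrum (odom M) (obs M)"

definition Pproj :: "('h::cinner_space, 's) qmeas \<Rightarrow> real \<Rightarrow> 'h \<Rightarrow> 'h" where
  "Pproj M x = proj (eigenspace (odom M) (obs M) x)"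

definition quantum_measurement :: "('h::{cinner_space,complete_space}, 's) qmeas \<Rightarrow> bool" where
  "quantum_measurement M \<longleftrightarrow>
     hilbert_subspace (hspace M) \<and> state M \<in> hspace M \<and> norm (state M) = 1 \<and>
     self_adjoint (hspace M) (odom M) (obs M) \<and>
     discrete_spectrum (hspace M) (odom M) (obs M) \<and>
     cg M ` outcomes M = spec M"

definition weight :: "('h::cinner_space, 's) qmeas \<Rightarrow> 's set \<Rightarrow> real" where
  "weight M E = (\<Sum>\<^sub>\<infinity>x\<in>cg M ` E. Re (cinner (state M) (Pproj M x (state M))))"

definition rich :: "('h::{cinner_space,complete_space}, 's) qmeas set \<Rightarrow> bool" where
  "rich MM \<longleftrightarrow> (\<forall>n (w :: nat \<Rightarrow> real).
      (\<forall>i<n. 0 < w i) \<and> (\<Sum>i<n. w i) = 1 \<longrightarrow>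
      (\<exists>M\<in>MM. \<exists>f. bij_betw f {..<n} (outcomes M) \<and> (\<forall>i<n. weight M {f i} = w i)))"

text \<open>A likelihood ordering is a relation ge with  ge E M F N  meaning  E|M \<succeq> F|N;
  only pairs with M \<in> MM and E \<subseteq> S_M are relevant.\<close>

type_synonym ('h, 's) lordering = "'s set \<Rightarrow> ('h, 's) qmeas \<Rightarrow> 's set \<Rightarrow> ('h, 's) qmeas \<Rightarrow> bool"

definition lsim :: "('h, 's) lordering \<Rightarrow> 's set \<Rightarrow> ('h, 's) qmeas \<Rightarrow> 's set \<Rightarrow> ('h, 's) qmeas \<Rightarrow> bool" where
  "lsim ge E M F N \<longleftrightarrow> ge E M F N \<and> ge F N E M"

definition lnull :: "('h, 's) lordering \<Rightarrow> 's set \<Rightarrow> ('h, 's) qmeas \<Rightarrow> bool" where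
  "lnull ge E M \<longleftrightarrow> lsim ge E M {} M"

definition minimally_rational :: "('h, 's) qmeas set \<Rightarrow> ('h, 's) lordering \<Rightarrow> bool" where
  "minimally_rational MM ge \<longleftrightarrow>
     (\<forall>M\<in>MM. \<forall>N\<in>MM. \<forall>K\<in>MM. \<forall>E F G.
        E \<subseteq> outcomes M \<and> F \<subseteq> outcomes N \<and> G \<subseteq> outcomes K \<and>
        ge E M F N \<and> ge F N G K \<longrightarrow> ge E M G K) \<and>
     (\<exists>M\<in>MM. \<exists>E. E \<subseteq> outcomes M \<and> \<not> lnull ge E M) \<and>
     (\<forall>M\<in>MM. \<forall>E F. E \<subseteq> F \<and> F \<subseteq> outcomes M \<longrightarrow>
        ge F M E M \<and> (lsim ge F M E M \<longleftrightarrow> lnull ge (F - E) M))"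

definition satisfies_equivalence :: "('h::cinner_space, 's) qmeas set \<Rightarrow> ('h, 's) lordering \<Rightarrow> bool" where
  "satisfies_equivalence MM ge \<longleftrightarrow>
     (\<forall>M\<in>MM. \<forall>N\<in>MM. \<forall>E F. E \<subseteq> outcomes M \<and> F \<subseteq> outcomes N \<and>
        weight M E = weight N F \<longrightarrow> lsim ge E M F N)"

definition represents :: "('h, 's) qmeas set \<Rightarrow> ('h, 's) lordering \<Rightarrow> ('s set \<Rightarrow> ('h, 's) qmeas \<Rightarrow> real) \<Rightarrow> bool" where
  "represents MM ge Pr \<longleftrightarrow>
     (\<forall>M\<in>MM. Pr {} M = 0 \<and> Pr (outcomes M) M = 1) \<and>
     (\<forall>M\<in>MM. \<forall>E F. E \<subseteq> outcomes M \<and> F \<subseteq> outcomes M \<and> E \<inter> F = {} \<longrightarrow>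
        Pr (E \<union> F) M = Pr E M + Pr F M) \<and>
     (\<forall>M\<in>MM. \<forall>N\<in>MM. \<forall>E F. E \<subseteq> outcomes M \<and> F \<subseteq> outcomes N \<longrightarrow>
        (Pr E M \<ge> Pr F N \<longleftrightarrow> ge E M F N))"

definition uniquely_represents :: "('h, 's) qmeas set \<Rightarrow> ('h, 's) lordering \<Rightarrow> ('s set \<Rightarrow> ('h, 's) qmeas \<Rightarrow> real) \<Rightarrow> bool" where
  "uniquely_represents MM ge Pr \<longleftrightarrow> represents MM ge Pr \<and>
     (\<forall>Pr'. represents MM ge Pr' \<longrightarrow> (\<forall>M\<in>MM. \<forall>E. E \<subseteq> outcomes M \<longrightarrow> Pr' E M = Pr E M))"

end

(* The weight W_M(E) sums the spectral weights ||P_x psi||^2 over the eigenvalues x in C(E). By the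
   projection theorem they are nonnegative, and since the eigenvectors of X span a dense subspace
   they add up to ||psi||^2 = 1; so W_M is monotone with values in [0, 1].

   Richness provides, for all 0 <= a <= b <= 1, a measurement with nested events A inside B of
   weights a and b. Comparing two events through such a measurement by equivalence and dominance
   shows that E|M is at least as likely as F|N iff W_N(F) <= W_M(E), once null events are known to
   have weight 0: a null event of positive weight would, by halving and doubling, make an event of
   weight 1 null, contradicting separation. The same fact makes W additive, because two outcomes
   with a common eigenvalue force that eigenvalue to have weight 0. So W represents the ordering.

   Conversely, a representing Pr has the form Pr(E|M) = phi(W_M(E)), where the nested events make
   phi monotone and additive on [0, 1] with phi(1) = 1; such a phi is the identity. *)

theory Submission
  imports Defs
begin

section \<open>Complex inner product spaces\<close>

lemma cinner_add_left: "cinner (x + y) (z::'a::cinner_space) = cinner x z + cinner y z"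
  by (metis cinner_commute cinner_add_right complex_cnj_add)

lemma cinner_scaleC_left: "cinner (scaleC c x) (y::'a::cinner_space) = cnj c * cinner x y"
  by (metis cinner_commute cinner_scaleC_right complex_cnj_mult)

lemma cinner_zero_right [simp]: "cinner x (0::'a::cinner_space) = 0"
  by (metis add_cancel_left_left cinner_add_right add_0)

lemma cinner_zero_left [simp]: "cinner (0::'a::cinner_space) x = 0"
  by (metis cinner_commute cinner_zero_right complex_cnj_zero)

lemma scaleC_zero_right [simp]: "scaleC c (0::'a::cinner_space) = 0"
  by (metis add_cancel_left_left scaleC_add_right)

lemma cinner_diff_right: "cinner x (y - z::'a::cinner_space) = cinner x y - cinner x z"
  by (metis cinner_add_right eq_diff_eq)

lemma cinner_diff_left: "cinner (x - y) (z::'a::cinner_space) = cinner x z - cinner y z"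
  by (metis cinner_add_left eq_diff_eq)

lemma cinner_self: "cinner x (x::'a::cinner_space) = complex_of_real (norm x ^ 2)"
  using cinner_nonneg[of x] norm_eq_sqrt_cinner[of x] by (simp add: complex_eq_iff)

lemma power2_norm_eq_Re_cinner: "norm x ^ 2 = Re (cinner x (x::'a::cinner_space))"
  by (simp add: cinner_self)

lemma norm_scaleC: "norm (scaleC c (x::'a::cinner_space)) = cmod c * norm x"
proof -
  have "cinner (scaleC c x) (scaleC c x) = (c * cnj c) * cinner x x"
    by (simp add: cinner_scaleC_left cinner_scaleC_right mult_ac)
  also have "c * cnj c = complex_of_real (cmod c ^ 2)"
    by (rule complex_norm_square [symmetric])
  finally have "norm (scaleC c x) ^ 2 = (cmod c * norm x) ^ 2"
    by (simp add: power2_norm_eq_Re_cinner power_mult_distrib del: of_real_power)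
  then show ?thesis
    by simp
qed

lemma pythagoras:
  fixes x y :: "'a::cinner_space"
  assumes "cinner x y = 0"
  shows "norm (x + y) ^ 2 = norm x ^ 2 + norm y ^ 2"
proof -
  have "cinner y x = 0"
    using assms cinner_commute[of y x] by simp
  then have "cinner (x + y) (x + y) = cinner x x + cinner y y"
    using assms by (simp add: cinner_add_left cinner_add_right)
  then show ?thesis
    by (simp add: power2_norm_eq_Re_cinner)
qed

lemma norm_le_norm_add_orthogonal:
  fixes r w :: "'a::cinner_space"
  assumes "cinner r w = 0"
  shows "norm r \<le> norm (r + w)"
proof -
  have "norm r ^ 2 \<le> norm (r + w) ^ 2"
    using pythagoras[OF assms] by simp
  then show ?thesis
    by (metis abs_norm_cancel norm_ge_zero power2_le_iff_abs_le)
qed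

lemma parallelogram_law:
  fixes x y :: "'a::cinner_space"
  shows "norm (x + y) ^ 2 + norm (x - y) ^ 2 = 2 * norm x ^ 2 + 2 * norm y ^ 2"
proof -
  have "Re (cinner (x + y) (x + y)) + Re (cinner (x - y) (x - y))
      = 2 * Re (cinner x x) + 2 * Re (cinner y y)"
    by (simp add: cinner_add_left cinner_add_right cinner_diff_left cinner_diff_right)
  then show ?thesis
    by (simp add: power2_norm_eq_Re_cinner)
qed

lemma power2_norm_split_along:
  fixes u w :: "'a::cinner_space"
  assumes "u \<noteq> 0"
  defines "s \<equiv> cinner u w / complex_of_real (norm u ^ 2)"
  shows "norm w ^ 2 = cmod (cinner u w) ^ 2 / norm u ^ 2 + norm (w - scaleC s u) ^ 2"
proof -
  have "cinner u (w - scaleC s u) = 0"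
    using assms by (simp add: s_def cinner_diff_right cinner_scaleC_right cinner_self)
  then have "cinner (scaleC s u) (w - scaleC s u) = 0"
    by (simp add: cinner_scaleC_left)
  then have "norm w ^ 2 = norm (scaleC s u) ^ 2 + norm (w - scaleC s u) ^ 2"
    using pythagoras by fastforce
  moreover have "norm (scaleC s u) ^ 2 = cmod (cinner u w) ^ 2 / norm u ^ 2"
    using assms by (simp add: s_def norm_scaleC norm_divide norm_power power_divide)
      (simp add: field_simps eval_nat_numeral)
  ultimately show ?thesis
    by simp
qed

lemma cinner_cauchy_schwarz: "cmod (cinner x y) \<le> norm x * norm (y::'a::cinner_space)"
proof (cases "x = 0")
  case False
  then have "cmod (cinner x y) ^ 2 / norm x ^ 2 \<le> norm y ^ 2"
    using power2_norm_split_along[OF False, of y] by (metis le_add_same_cancel1 zero_le_power2)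
  then have "cmod (cinner x y) ^ 2 \<le> (norm x * norm y) ^ 2"
    using False by (simp add: field_simps)
  then show ?thesis
    by (simp add: power2_le_iff_abs_le)
qed simp

lemma bounded_bilinear_cinner: "bounded_bilinear (cinner :: 'a::cinner_space \<Rightarrow> 'a \<Rightarrow> complex)"
proof
  fix a a' b b' :: 'a and r :: real
  show "cinner (a + a') b = cinner a b + cinner a' b"
    by (rule cinner_add_left)
  show "cinner a (b + b') = cinner a b + cinner a b'"
    by (rule cinner_add_right)
  show "cinner (scaleR r a) b = scaleR r (cinner a b)"
    by (simp add: scaleR_scaleC cinner_scaleC_left scaleR_conv_of_real)
  show "cinner a (scaleR r b) = scaleR r (cinner a b)"
    by (simp add: scaleR_scaleC cinner_scaleC_right scaleR_conv_of_real)
  show "\<exists>K. \<forall>a b::'a. cmod (cinner a b) \<le> norm a * norm b * K"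
    using cinner_cauchy_schwarz by (metis mult.right_neutral)
qed

lemmas cinner_sum_left = bounded_bilinear.sum_left [OF bounded_bilinear_cinner]
lemmas cinner_sum_right = bounded_bilinear.sum_right [OF bounded_bilinear_cinner]
lemmas cinner_scaleR_left = bounded_bilinear.scaleR_left [OF bounded_bilinear_cinner]
lemmas cinner_scaleR_right = bounded_bilinear.scaleR_right [OF bounded_bilinear_cinner]
lemmas continuous_on_cinner [continuous_intros] =
  bounded_bilinear.continuous_on [OF bounded_bilinear_cinner]

lemma orthogonal_if_best_approximation:
  fixes u w :: "'a::cinner_space"
  assumes "\<And>s. norm w \<le> norm (w - scaleC s u)"
  shows "cinner u w = 0"
proof (cases "u = 0")
  case False
  define s where "s = cinner u w / complex_of_real (norm u ^ 2)"
  have "norm w ^ 2 \<le> norm (w - scaleC s u) ^ 2"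
    using assms by (simp add: power_mono)
  then have "cmod (cinner u w) ^ 2 / norm u ^ 2 \<le> 0"
    using power2_norm_split_along[OF False, of w] by (simp add: s_def)
  then show ?thesis
    using False by (simp add: divide_le_0_iff)
qed simp

section \<open>Closed subspaces and orthogonal projection\<close>

context
  fixes K :: "'a::cinner_space set"
  assumes K: "csubspace K"
begin

lemma csubspace_zero: "0 \<in> K"
  using K by (simp add: csubspace_def)

lemma csubspace_add: "x \<in> K \<Longrightarrow> y \<in> K \<Longrightarrow> x + y \<in> K"
  using K by (simp add: csubspace_def)

lemma csubspace_scaleC: "x \<in> K \<Longrightarrow> scaleC c x \<in> K"
  using K by (simp add: csubspace_def)

lemma csubspace_scaleR: "x \<in> K \<Longrightarrow> scaleR r x \<in> K"
  by (simp add: scaleR_scaleC csubspace_scaleC)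

lemma csubspace_diff: "x \<in> K \<Longrightarrow> y \<in> K \<Longrightarrow> x - y \<in> K"
  by (metis csubspace_add csubspace_scaleR scaleR_minus1_left diff_conv_add_uminus)

end

text \<open>The midpoint of \<open>x\<close> and \<open>y\<close> lies in \<open>K\<close>, so the parallelogram law bounds their distance
  by the excess of their distances from \<open>v\<close> over the distance of \<open>v\<close> from \<open>K\<close>.\<close>

lemma power2_norm_diff_le_infdist_excess:
  fixes K :: "'a::cinner_space set"
  assumes K: "csubspace K" and xy: "x \<in> K" "y \<in> K"
  shows "norm (x - y) ^ 2 \<le>
    2 * (norm (v - x) ^ 2 - infdist v K ^ 2) + 2 * (norm (v - y) ^ 2 - infdist v K ^ 2)"
proof -
  have "scaleR (1/2) (x + y) \<in> K"
    by (intro csubspace_scaleR csubspace_add K xy)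
  then have "infdist v K \<le> norm (v - scaleR (1/2) (x + y))"
    using infdist_le[of _ K v] by (simp add: dist_norm)
  moreover have "(v - x) + (v - y) = scaleR 2 (v - scaleR (1/2) (x + y))"
    by (simp add: algebra_simps scaleR_2)
  ultimately have "4 * infdist v K ^ 2 \<le> norm ((v - x) + (v - y)) ^ 2"
    using infdist_nonneg[of v K] by (simp add: power_mono power_mult_distrib)
  moreover have "(v - x) - (v - y) = y - x"
    by simp
  ultimately show ?thesis
    using parallelogram_law[of "v - x" "v - y"] by (simp add: norm_minus_commute)
qed

lemma Cauchy_minimizing_sequence:
  fixes K :: "'a::cinner_space set"
  assumes K: "csubspace K" and ks_K: "\<And>n. ks n \<in> K"
    and ks_dist: "(\<lambda>n. norm (v - ks n)) \<longlonglongrightarrow> infdist v K"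
  shows "Cauchy ks"
proof (rule CauchyI)
  define \<delta> where "\<delta> n = norm (v - ks n) ^ 2 - infdist v K ^ 2" for n
  have "\<delta> \<longlonglongrightarrow> 0"
    unfolding \<delta>_def
    using tendsto_diff[OF tendsto_power[OF ks_dist] tendsto_const, of 2 "infdist v K ^ 2"] by simp
  fix e :: real
  assume "0 < e"
  then have "0 < e ^ 2 / 4"
    by simp
  then have "\<forall>\<^sub>F n in sequentially. \<delta> n < e ^ 2 / 4"
    by (rule order_tendstoD(2)[OF \<open>\<delta> \<longlonglongrightarrow> 0\<close>])
  then obtain N where N: "\<And>n. n \<ge> N \<Longrightarrow> \<delta> n < e ^ 2 / 4"
    unfolding eventually_sequentially by blast
  have "norm (ks m - ks n) < e" if "m \<ge> N" "n \<ge> N" for m n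
  proof (rule power_less_imp_less_base)
    have "norm (ks m - ks n) ^ 2 \<le> 2 * \<delta> m + 2 * \<delta> n"
      using power2_norm_diff_le_infdist_excess[OF K ks_K ks_K] by (simp add: \<delta>_def)
    then show "norm (ks m - ks n) ^ 2 < e ^ 2"
      using N[OF that(1)] N[OF that(2)] by linarith
  qed (use \<open>0 < e\<close> in simp)
  then show "\<exists>M. \<forall>m\<ge>M. \<forall>n\<ge>M. norm (ks m - ks n) < e"
    by blast
qed

lemma best_approximation_exists:
  fixes K :: "'a::{cinner_space,complete_space} set"
  assumes K: "csubspace K" "closed K"
  obtains k where "k \<in> K" "\<And>k'. k' \<in> K \<Longrightarrow> norm (v - k) \<le> norm (v - k')"
proof -
  define d where "d = infdist v K"
  have d_le: "d \<le> norm (v - k)" if "k \<in> K" for k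
    using infdist_le[OF that, of v] by (simp add: d_def dist_norm)
  have "\<exists>k\<in>K. norm (v - k) < d + inverse (Suc n)" for n
  proof -
    have "K \<noteq> {}"
      using csubspace_zero[OF K(1)] by blast
    then show ?thesis
      using cInf_lessD[of "(\<lambda>k. dist v k) ` K" "d + inverse (Suc n)"]
      by (simp add: d_def infdist_notempty dist_norm)
  qed
  then obtain ks where ks_K: "\<And>n. ks n \<in> K"
    and ks_close: "\<And>n. norm (v - ks n) < d + inverse (Suc n)"
    by metis
  have ks_dist: "(\<lambda>n. norm (v - ks n)) \<longlonglongrightarrow> d"
  proof (rule tendsto_sandwich[OF _ _ tendsto_const])
    show "\<forall>\<^sub>F n in sequentially. d \<le> norm (v - ks n)"
      by (intro always_eventually allI d_le ks_K)
    show "\<forall>\<^sub>F n in sequentially. norm (v - ks n) \<le> d + inverse (Suc n)"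
      by (intro always_eventually allI less_imp_le ks_close)
    show "(\<lambda>n. d + inverse (real (Suc n))) \<longlonglongrightarrow> d"
      using tendsto_add[OF tendsto_const LIMSEQ_inverse_real_of_nat] by simp
  qed
  then have "Cauchy ks"
    using Cauchy_minimizing_sequence[OF K(1) ks_K] by (simp add: d_def)
  then obtain k where k: "ks \<longlonglongrightarrow> k"
    by (metis Cauchy_convergent_iff convergent_def)
  show ?thesis
  proof (rule that)
    show "k \<in> K"
      using closed_sequentially[OF K(2) ks_K k] .
    have "norm (v - k) = d"
      using tendsto_unique[OF _ tendsto_norm[OF tendsto_diff[OF tendsto_const k]] ks_dist] by simp
    then show "norm (v - k) \<le> norm (v - k')" if "k' \<in> K" for k'
      using d_le[OF that] by simp
  qed
qed

lemma proj_closed_csubspace: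
  fixes K :: "'a::{cinner_space,complete_space} set"
  assumes K: "csubspace K" "closed K"
  shows proj_in: "proj K v \<in> K"
    and proj_orthogonal: "u \<in> K \<Longrightarrow> cinner u (v - proj K v) = 0"
proof -
  obtain k where k: "k \<in> K" "\<And>k'. k' \<in> K \<Longrightarrow> norm (v - k) \<le> norm (v - k')"
    using best_approximation_exists[OF K] by blast
  have k_orth: "\<forall>u\<in>K. cinner u (v - k) = 0"
  proof
    fix u
    assume "u \<in> K"
    show "cinner u (v - k) = 0"
    proof (rule orthogonal_if_best_approximation)
      fix s
      have "k + scaleC s u \<in> K"
        by (intro csubspace_add csubspace_scaleC K k(1) \<open>u \<in> K\<close>)
      then show "norm (v - k) \<le> norm (v - k - scaleC s u)"
        using k(2) by (simp add: diff_diff_eq)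
    qed
  qed
  have "proj K v = k"
    unfolding proj_def
  proof (rule the_equality)
    show "k \<in> K \<and> (\<forall>u\<in>K. cinner u (v - k) = 0)"
      using k(1) k_orth by blast
  next
    fix k'
    assume k': "k' \<in> K \<and> (\<forall>u\<in>K. cinner u (v - k') = 0)"
    then have "k' - k \<in> K"
      using csubspace_diff[OF K(1) _ k(1)] by blast
    then have "cinner (k' - k) (k' - k) = cinner (k' - k) (v - k) - cinner (k' - k) (v - k')"
      by (simp add: cinner_diff_right)
    also have "\<dots> = 0"
      using \<open>k' - k \<in> K\<close> k_orth k' by simp
    finally show "k' = k"
      using cinner_eq_zero_iff[of "k' - k"] by simp
  qed
  then show "proj K v \<in> K" "u \<in> K \<Longrightarrow> cinner u (v - proj K v) = 0"
    using k(1) k_orth by auto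
qed

section \<open>Eigenspaces of self-adjoint operators\<close>

lemma eigenspace_iff: "v \<in> eigenspace D X x \<longleftrightarrow> v \<in> D \<and> X v = scaleR x v"
  by (simp add: eigenspace_def scaleR_scaleC)

lemma orthogonal_to_dense_eq_0:
  fixes w :: "'a::cinner_space"
  assumes "H \<subseteq> closure D" "w \<in> H" "\<And>u. u \<in> D \<Longrightarrow> cinner u w = 0"
  shows "w = 0"
proof -
  have "closed {u. cinner u w = 0}"
    by (intro closed_Collect_eq continuous_intros)
  then have "closure D \<subseteq> {u. cinner u w = 0}"
    using assms(3) by (intro closure_minimal) auto
  then have "cinner w w = 0"
    using assms(1,2) by blast
  then show ?thesis
    using cinner_eq_zero_iff by blast
qed

context
  fixes H D :: "'a::cinner_space set" and X :: "'a \<Rightarrow> 'a"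
  assumes X: "self_adjoint H D X"
begin

lemma eigenspace_csubspace: "csubspace (eigenspace D X x)"
proof -
  have D: "csubspace D" and X_add: "\<And>u v. u \<in> D \<Longrightarrow> v \<in> D \<Longrightarrow> X (u + v) = X u + X v"
    and X_scaleC: "\<And>c u. u \<in> D \<Longrightarrow> X (scaleC c u) = scaleC c (X u)"
    using X by (auto simp: self_adjoint_def)
  have "X 0 = 0"
    using X_add[of 0 0] csubspace_zero[OF D] by simp
  then show ?thesis
    using csubspace_zero[OF D] csubspace_add[OF D] csubspace_scaleC[OF D]
    by (auto simp: csubspace_def eigenspace_def X_add X_scaleC scaleC_add_right scaleC_scaleC
        mult.commute)
qed

lemma eigenspace_orthogonal:
  assumes "x \<noteq> y" "u \<in> eigenspace D X x" "v \<in> eigenspace D X y"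
  shows "cinner u v = 0"
proof -
  have u: "u \<in> D" "X u = scaleR x u" and v: "v \<in> D" "X v = scaleR y v"
    using assms(2,3) by (auto simp: eigenspace_iff)
  have "cinner (X u) v = cinner u (X v)"
    using X u(1) v(1) unfolding self_adjoint_def by blast
  then have "scaleR x (cinner u v) = scaleR y (cinner u v)"
    by (simp add: u(2) v(2) cinner_scaleR_left cinner_scaleR_right)
  then show ?thesis
    using assms(1) by simp
qed

text \<open>The domain condition in \<^const>\<open>self_adjoint\<close> (every \<open>v\<close> at which the adjoint is
  defined lies in \<open>D\<close>) is what makes limits of eigenvectors eigenvectors.\<close>

lemma eigenspace_closed:
  assumes H_sub: "csubspace H" "closed H"
  shows "closed (eigenspace D X x)"
proof -
  have D_H: "D \<subseteq> H" and H_D: "H \<subseteq> closure D" and X_H: "\<And>u. u \<in> D \<Longrightarrow> X u \<in> H"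
    and X_sym: "\<And>u v. u \<in> D \<Longrightarrow> v \<in> D \<Longrightarrow> cinner (X u) v = cinner u (X v)"
    and X_adj: "\<And>v w. v \<in> H \<Longrightarrow> w \<in> H \<Longrightarrow> \<forall>u\<in>D. cinner (X u) v = cinner u w \<Longrightarrow> v \<in> D"
    using X unfolding self_adjoint_def by blast+
  let ?E = "eigenspace D X x"
  have "v \<in> ?E" if v: "v \<in> closure ?E" for v
  proof -
    have "closure ?E \<subseteq> H"
      using D_H H_sub(2) by (intro closure_minimal) (auto simp: eigenspace_def)
    then have "v \<in> H" "scaleR x v \<in> H"
      using v csubspace_scaleR[OF H_sub(1)] by auto
    have adj: "cinner (X u) v = cinner u (scaleR x v)" if "u \<in> D" for u
    proof -
      have "closed {v. cinner (X u) v = cinner u (scaleR x v)}"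
        by (intro closed_Collect_eq continuous_intros)
      moreover have "?E \<subseteq> {v. cinner (X u) v = cinner u (scaleR x v)}"
        using X_sym[OF that] by (auto simp: eigenspace_iff)
      ultimately show ?thesis
        using v closure_minimal by blast
    qed
    then have "v \<in> D"
      using X_adj \<open>v \<in> H\<close> \<open>scaleR x v \<in> H\<close> by blast
    moreover have "X v - scaleR x v = 0"
    proof (rule orthogonal_to_dense_eq_0[OF H_D])
      show "X v - scaleR x v \<in> H"
        using csubspace_diff[OF H_sub(1) X_H[OF \<open>v \<in> D\<close>] \<open>scaleR x v \<in> H\<close>] .
      show "cinner u (X v - scaleR x v) = 0" if "u \<in> D" for u
        using adj[OF that] X_sym[OF that \<open>v \<in> D\<close>] by (simp add: cinner_diff_right)
    qed
    ultimately show ?thesis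
      by (simp add: eigenspace_iff)
  qed
  then show ?thesis
    using closure_subset_eq by blast
qed

end

section \<open>Spectral weights of a quantum measurement\<close>

definition spectral_weight :: "('h::cinner_space, 's) qmeas \<Rightarrow> real \<Rightarrow> real" where
  "spectral_weight M x = Re (cinner (state M) (Pproj M x (state M)))"

definition spectral_sum :: "('h::cinner_space, 's) qmeas \<Rightarrow> real set \<Rightarrow> 'h" where
  "spectral_sum M G = (\<Sum>x\<in>G. Pproj M x (state M))"

lemma weight_eq_infsum: "weight M E = infsum (spectral_weight M) (cg M ` E)"
  by (simp add: weight_def spectral_weight_def [abs_def])

lemma weight_empty [simp]: "weight M {} = 0"
  by (simp add: weight_eq_infsum)

lemma weight_singleton: "weight M {a} = spectral_weight M (cg M a)"
  by (simp add: weight_eq_infsum)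

context
  fixes M :: "('h::{cinner_space,complete_space}, 's) qmeas"
  assumes M: "quantum_measurement M"
begin

lemma Pproj_in_eigenspace: "Pproj M x v \<in> eigenspace (odom M) (obs M) x"
  and Pproj_orthogonal: "u \<in> eigenspace (odom M) (obs M) x \<Longrightarrow> cinner u (v - Pproj M x v) = 0"
proof -
  have "self_adjoint (hspace M) (odom M) (obs M)" "csubspace (hspace M)" "closed (hspace M)"
    using M by (auto simp: quantum_measurement_def hilbert_subspace_def)
  then have "csubspace (eigenspace (odom M) (obs M) x)" "closed (eigenspace (odom M) (obs M) x)"
    by (auto intro: eigenspace_csubspace eigenspace_closed)
  then show "Pproj M x v \<in> eigenspace (odom M) (obs M) x"
    "u \<in> eigenspace (odom M) (obs M) x \<Longrightarrow> cinner u (v - Pproj M x v) = 0"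
    unfolding Pproj_def by (auto intro: proj_in proj_orthogonal)
qed

lemma Pproj_orthogonal_eigenspace:
  assumes "x \<noteq> y" "u \<in> eigenspace (odom M) (obs M) y"
  shows "cinner u (Pproj M x v) = 0"
  using M assms eigenspace_orthogonal[OF _ _ assms(2) Pproj_in_eigenspace]
  by (auto simp: quantum_measurement_def)

lemma spectral_weight_eq_norm: "spectral_weight M x = norm (Pproj M x (state M)) ^ 2"
proof -
  let ?p = "Pproj M x (state M)"
  have "cinner (state M - ?p) ?p = 0"
    using Pproj_orthogonal[OF Pproj_in_eigenspace] cinner_commute by (metis complex_cnj_zero)
  then have "cinner (state M) ?p = cinner ?p ?p"
    by (simp add: cinner_diff_left)
  then show ?thesis
    by (simp add: spectral_weight_def power2_norm_eq_Re_cinner)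
qed

lemma spectral_weight_nonneg: "0 \<le> spectral_weight M x"
  by (simp add: spectral_weight_eq_norm)

lemma residual_orthogonal:
  assumes "finite G" "y \<in> G" "u \<in> eigenspace (odom M) (obs M) y"
  shows "cinner u (state M - spectral_sum M G) = 0"
proof -
  have "spectral_sum M G = Pproj M y (state M) + (\<Sum>x\<in>G - {y}. Pproj M x (state M))"
    using assms(1,2) by (simp add: spectral_sum_def sum.remove)
  then have "cinner u (state M - spectral_sum M G) = cinner u (state M - Pproj M y (state M))
      - (\<Sum>x\<in>G - {y}. cinner u (Pproj M x (state M)))"
    by (simp add: cinner_diff_right cinner_add_right cinner_sum_right)
  also have "cinner u (state M - Pproj M y (state M)) = 0"
    using assms(3) by (rule Pproj_orthogonal)
  also have "(\<Sum>x\<in>G - {y}. cinner u (Pproj M x (state M))) = 0"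
    using assms(3) by (intro sum.neutral ballI Pproj_orthogonal_eigenspace) auto
  finally show ?thesis
    by simp
qed

lemma spectral_sum_orthogonal_residual:
  assumes "finite G"
  shows "cinner (spectral_sum M G) (state M - spectral_sum M G) = 0"
proof -
  have "(\<Sum>x\<in>G. cinner (Pproj M x (state M)) (state M - spectral_sum M G)) = 0"
    using residual_orthogonal[OF assms _ Pproj_in_eigenspace] by simp
  then show ?thesis
    by (simp add: spectral_sum_def cinner_sum_left)
qed

lemma sum_spectral_weight:
  assumes "finite G"
  shows "(\<Sum>x\<in>G. spectral_weight M x) = 1 - norm (state M - spectral_sum M G) ^ 2"
proof -
  let ?\<psi> = "state M" and ?S = "spectral_sum M G"
  have "cinner ?S (?\<psi> - ?S) = 0"
    using assms by (rule spectral_sum_orthogonal_residual)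
  then have "cinner (?\<psi> - ?S) (?\<psi> - ?S) = cinner ?\<psi> ?\<psi> - cinner ?\<psi> ?S"
    by (simp add: cinner_diff_left cinner_diff_right)
  moreover have "cinner ?\<psi> ?\<psi> = 1"
    using M by (simp add: cinner_self quantum_measurement_def)
  ultimately show ?thesis
    by (simp add: power2_norm_eq_Re_cinner spectral_sum_def cinner_sum_right spectral_weight_def)
qed

lemma sum_spectral_weight_le_1: "finite G \<Longrightarrow> (\<Sum>x\<in>G. spectral_weight M x) \<le> 1"
  by (simp add: sum_spectral_weight)

text \<open>Since the eigenvectors span a dense subspace, \<open>state M\<close> is approximated by finitely many
  eigenvectors, and \<^const>\<open>spectral_sum\<close> is at least as close to it.\<close>

lemma sum_spectral_weight_approx:
  assumes "0 < e"
  obtains G where "finite G" "G \<subseteq> spec M" "1 - e \<le> (\<Sum>x\<in>G. spectral_weight M x)"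
proof -
  let ?E = "eigenspace (odom M) (obs M)" and ?\<psi> = "state M"
  have "?\<psi> \<in> closure (cspan (\<Union>x\<in>spec M. ?E x))"
    using M by (auto simp: quantum_measurement_def discrete_spectrum_def spec_def)
  moreover have "0 < sqrt e"
    using assms by simp
  ultimately obtain \<phi> where \<phi>: "\<phi> \<in> cspan (\<Union>x\<in>spec M. ?E x)" "dist \<phi> ?\<psi> < sqrt e"
    unfolding closure_approachable by blast
  then obtain F c where F: "finite F" "F \<subseteq> (\<Union>x\<in>spec M. ?E x)" "\<phi> = (\<Sum>v\<in>F. scaleC (c v) v)"
    by (auto simp: cspan_def)
  have "\<forall>v\<in>F. \<exists>x\<in>spec M. v \<in> ?E x"
    using F(2) by blast
  then obtain ev where ev: "\<And>v. v \<in> F \<Longrightarrow> ev v \<in> spec M \<and> v \<in> ?E (ev v)"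
    by metis
  define G where "G = ev ` F"
  let ?S = "spectral_sum M G"
  have G: "finite G" "G \<subseteq> spec M"
    using F(1) ev by (auto simp: G_def)
  have "cinner v (?\<psi> - ?S) = 0" if "v \<in> F" for v
    using residual_orthogonal[OF G(1), of "ev v" v] ev[OF that] that by (simp add: G_def)
  then have "cinner \<phi> (?\<psi> - ?S) = 0"
    by (simp add: F(3) cinner_sum_left cinner_scaleC_left)
  moreover have "cinner ?S (?\<psi> - ?S) = 0"
    using G(1) by (rule spectral_sum_orthogonal_residual)
  ultimately have "cinner (?S - \<phi>) (?\<psi> - ?S) = 0"
    by (simp add: cinner_diff_left)
  then have "cinner (?\<psi> - ?S) (?S - \<phi>) = 0"
    using cinner_commute by (metis complex_cnj_zero)
  then have "norm (?\<psi> - ?S) \<le> norm (?\<psi> - \<phi>)"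
    using norm_le_norm_add_orthogonal by fastforce
  also have "\<dots> < sqrt e"
    using \<phi>(2) by (simp add: dist_norm norm_minus_commute)
  finally have "norm (?\<psi> - ?S) ^ 2 < sqrt e ^ 2"
    by (intro power_strict_mono) auto
  then show ?thesis
    using that G sum_spectral_weight[OF G(1)] assms by simp
qed

lemma spectral_weight_summable: "spectral_weight M summable_on A"
proof (rule nonneg_bdd_above_summable_on)
  show "0 \<le> spectral_weight M x" for x
    by (rule spectral_weight_nonneg)
  show "bdd_above (sum (spectral_weight M) ` {F. F \<subseteq> A \<and> finite F})"
    using sum_spectral_weight_le_1 by (intro bdd_aboveI[of _ 1]) blast
qed

lemma infsum_spectral_weight: "infsum (spectral_weight M) (spec M) = 1"
proof (rule antisym)
  show "infsum (spectral_weight M) (spec M) \<le> 1"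
    by (rule infsum_le_finite_sums[OF spectral_weight_summable sum_spectral_weight_le_1])
  show "1 \<le> infsum (spectral_weight M) (spec M)"
  proof (rule field_le_epsilon)
    fix e :: real
    assume "0 < e"
    then obtain G where G: "finite G" "G \<subseteq> spec M" "1 - e \<le> (\<Sum>x\<in>G. spectral_weight M x)"
      by (rule sum_spectral_weight_approx)
    moreover have "(\<Sum>x\<in>G. spectral_weight M x) \<le> infsum (spectral_weight M) (spec M)"
      by (rule finite_sum_le_infsum[OF spectral_weight_summable G(1,2) spectral_weight_nonneg])
    ultimately show "1 \<le> infsum (spectral_weight M) (spec M) + e"
      by simp
  qed
qed

lemma weight_outcomes: "weight M (outcomes M) = 1"
proof -
  have "cg M ` outcomes M = spec M"
    using M by (simp add: quantum_measurement_def)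
  then show ?thesis
    by (simp add: weight_eq_infsum infsum_spectral_weight)
qed

lemma weight_nonneg: "0 \<le> weight M E"
  unfolding weight_eq_infsum by (rule infsum_nonneg[OF spectral_weight_nonneg])

lemma weight_mono: "E \<subseteq> F \<Longrightarrow> weight M E \<le> weight M F"
  unfolding weight_eq_infsum
  by (rule infsum_mono2[OF spectral_weight_summable spectral_weight_summable image_mono
        spectral_weight_nonneg])

lemma weight_le_1: "E \<subseteq> outcomes M \<Longrightarrow> weight M E \<le> 1"
  using weight_mono[of E "outcomes M"] weight_outcomes by simp

lemma weight_Un_disjoint_if_shared_null:
  assumes shared: "\<And>x. x \<in> cg M ` E \<inter> cg M ` F \<Longrightarrow> spectral_weight M x = 0"
  shows "weight M (E \<union> F) = weight M E + weight M F"
proof -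
  let ?\<Sigma> = "infsum (spectral_weight M)"
  have "weight M (E \<union> F) = ?\<Sigma> (cg M ` E \<union> (cg M ` F - cg M ` E))"
    by (simp add: weight_eq_infsum image_Un)
  also have "\<dots> = ?\<Sigma> (cg M ` E) + ?\<Sigma> (cg M ` F - cg M ` E)"
    by (rule infsum_Un_disjoint[OF spectral_weight_summable spectral_weight_summable]) auto
  also have "?\<Sigma> (cg M ` F - cg M ` E) = ?\<Sigma> (cg M ` F)"
    using shared by (intro infsum_cong_neutral) auto
  finally show ?thesis
    by (simp add: weight_eq_infsum)
qed

end

section \<open>Monotone additive functions on the unit interval\<close>

lemma additive_unit_interval_fraction:
  fixes \<phi> :: "real \<Rightarrow> real"
  assumes add: "\<And>a b. 0 \<le> a \<Longrightarrow> 0 \<le> b \<Longrightarrow> a + b \<le> 1 \<Longrightarrow> \<phi> (a + b) = \<phi> a + \<phi> b"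
    and one: "\<phi> 1 = 1"
    and kn: "k \<le> n" "0 < n"
  shows "\<phi> (real k / real n) = real k / real n"
proof -
  have multiple: "\<phi> (real j / real n) = real j * \<phi> (1 / real n)" if "j \<le> n" for j
    using that
  proof (induction j)
    case 0
    then show ?case
      using add[of 0 0] by simp
  next
    case (Suc j)
    have "real (Suc j) / real n = real j / real n + 1 / real n"
      by (simp add: add_divide_distrib)
    moreover have "real j / real n + 1 / real n \<le> 1"
      using Suc.prems by (simp flip: add_divide_distrib)
    ultimately show ?case
      using Suc add[of "real j / real n" "1 / real n"] by (simp add: algebra_simps)
  qed
  have "1 = real n * \<phi> (1 / real n)"
    using multiple[of n] one kn(2) by simp
  then show ?thesis
    using multiple[OF kn(1)] kn(2) by (simp add: field_simps)
qed

lemma monotone_additive_unit_interval_approx: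
  fixes \<phi> :: "real \<Rightarrow> real"
  assumes add: "\<And>a b. 0 \<le> a \<Longrightarrow> 0 \<le> b \<Longrightarrow> a + b \<le> 1 \<Longrightarrow> \<phi> (a + b) = \<phi> a + \<phi> b"
    and mono: "\<And>a b. 0 \<le> a \<Longrightarrow> a \<le> b \<Longrightarrow> b \<le> 1 \<Longrightarrow> \<phi> a \<le> \<phi> b"
    and one: "\<phi> 1 = 1"
    and t: "0 \<le> t" "t \<le> 1" and n: "0 < n"
  shows "\<bar>\<phi> t - t\<bar> \<le> 1 / real n"
proof -
  define k where "k = nat \<lfloor>t * real n\<rfloor>"
  have k: "real k \<le> t * real n" "t * real n < real k + 1"
    using t by (simp_all add: k_def)
  have "real k \<le> real n"
    using k(1) mult_right_mono[OF t(2), of "real n"] by simp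
  then have "k \<le> n"
    by simp
  have fraction: "\<phi> (real j / real n) = real j / real n" if "j \<le> n" for j
    using additive_unit_interval_fraction[OF add one that n] by blast
  have lower: "real k / real n \<le> t" "real k / real n \<le> \<phi> t"
  proof -
    show kt: "real k / real n \<le> t"
      using k(1) n by (simp add: pos_divide_le_eq)
    show "real k / real n \<le> \<phi> t"
      using mono[OF _ kt t(2)] fraction[OF \<open>k \<le> n\<close>] by simp
  qed
  have upper: "t \<le> real (Suc k) / real n" "\<phi> t \<le> real (Suc k) / real n"
  proof -
    show tk: "t \<le> real (Suc k) / real n"
      using k(2) n by (simp add: pos_le_divide_eq)
    show "\<phi> t \<le> real (Suc k) / real n"
    proof (cases "k = n")
      case True
      then have "1 * real n \<le> t * real n"
        using k(1) by simp
      then have "t = 1"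
        using t(2) n mult_right_le_imp_le[of 1 "real n" t] by simp
      then show ?thesis
        using one True n by simp
    next
      case False
      then have "Suc k \<le> n"
        using \<open>k \<le> n\<close> by simp
      then show ?thesis
        using mono[OF t(1) tk] fraction by (simp del: of_nat_Suc)
    qed
  qed
  have "real (Suc k) / real n = real k / real n + 1 / real n"
    by (simp add: add_divide_distrib)
  then show ?thesis
    using lower upper by linarith
qed

lemma monotone_additive_unit_interval_eq_id:
  fixes \<phi> :: "real \<Rightarrow> real"
  assumes add: "\<And>a b. 0 \<le> a \<Longrightarrow> 0 \<le> b \<Longrightarrow> a + b \<le> 1 \<Longrightarrow> \<phi> (a + b) = \<phi> a + \<phi> b"
    and mono: "\<And>a b. 0 \<le> a \<Longrightarrow> a \<le> b \<Longrightarrow> b \<le> 1 \<Longrightarrow> \<phi> a \<le> \<phi> b"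
    and one: "\<phi> 1 = 1"
    and t: "0 \<le> t" "t \<le> 1"
  shows "\<phi> t = t"
proof (rule ccontr)
  assume "\<phi> t \<noteq> t"
  then obtain n where "0 < n" "inverse (real n) < \<bar>\<phi> t - t\<bar>"
    using ex_inverse_of_nat_less[of "\<bar>\<phi> t - t\<bar>"] by auto
  then show False
    using monotone_additive_unit_interval_approx[OF add mono one t \<open>0 < n\<close>]
    by (simp add: inverse_eq_divide)
qed

section \<open>Rich sets of measurements\<close>

text \<open>If the singleton weights are positive and sum to \<open>1\<close>, no two outcomes share an eigenvalue
  (its weight would be counted only once in the total), so the weight of an event is the sum of
  the weights of its outcomes.\<close>

lemma weight_image_of_rich_witness:
  fixes w :: "nat \<Rightarrow> real"
  assumes R: "quantum_measurement R" and f: "bij_betw f {..<n} (outcomes R)"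
    and w_pos: "\<forall>i<n. 0 < w i" and w_sum: "(\<Sum>i<n. w i) = 1"
    and w_weight: "\<forall>i<n. weight R {f i} = w i"
    and I: "I \<subseteq> {..<n}"
  shows "weight R (f ` I) = (\<Sum>i\<in>I. w i)"
proof -
  define g where "g = cg R \<circ> f"
  have g_weight: "spectral_weight R (g i) = w i" if "i < n" for i
    using w_weight that by (simp add: g_def weight_singleton)
  have weight_image: "weight R (f ` J) = (\<Sum>x\<in>g ` J. spectral_weight R x)" if "finite J" for J
    using that by (simp add: weight_eq_infsum g_def image_comp)
  have "inj_on g {..<n}"
  proof (rule ccontr)
    assume "\<not> inj_on g {..<n}"
    then obtain i j where ij: "i < n" "j < n" "i \<noteq> j" "g i = g j"
      by (auto simp: inj_on_def)
    then have "g j \<in> g ` ({..<n} - {j})"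
      by (metis DiffI image_eqI lessThan_iff singletonD)
    then have "g ` {..<n} = g ` ({..<n} - {j})"
      using ij(2) by (metis image_insert insert_Diff insert_absorb lessThan_iff)
    then have "1 = (\<Sum>x\<in>g ` ({..<n} - {j}). spectral_weight R x)"
      using weight_image[of "{..<n}"] weight_outcomes[OF R] f by (simp add: bij_betw_def)
    also have "\<dots> \<le> (\<Sum>i\<in>{..<n} - {j}. spectral_weight R (g i))"
      using sum_image_le[of "{..<n} - {j}" "spectral_weight R" g] spectral_weight_nonneg[OF R]
      by (simp add: comp_def)
    also have "\<dots> = (\<Sum>i\<in>{..<n} - {j}. w i)"
      using g_weight by (intro sum.cong) auto
    also have "\<dots> = 1 - w j"
      using w_sum ij(2) by (simp add: sum_diff1)
    finally show False
      using w_pos ij(2) by auto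
  qed
  then have "(\<Sum>x\<in>g ` I. spectral_weight R x) = (\<Sum>i\<in>I. spectral_weight R (g i))"
    using I by (simp add: sum.reindex inj_on_subset)
  then show ?thesis
    using weight_image[of I] g_weight I finite_subset[OF I] by (simp add: subset_iff)
qed

text \<open>Three consecutive blocks of outcomes with weights \<open>a\<close>, \<open>b - a\<close> and \<open>1 - b\<close> (blocks of
  weight \<open>0\<close> are left out, since richness only provides positive weights).\<close>

lemma rich_nested_events:
  assumes MM: "\<forall>M\<in>MM. quantum_measurement M" and "rich MM"
    and ab: "0 \<le> a" "a \<le> b" "b \<le> 1"
  obtains R A B where "R \<in> MM" "A \<subseteq> B" "B \<subseteq> outcomes R"
    "weight R A = a" "weight R B = b" "weight R (B - A) = b - a"
proof -
  let ?pos = "filter (\<lambda>x::real. 0 < x)"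
  define ws where "ws = ?pos [a] @ ?pos [b - a] @ ?pos [1 - b]"
  define n where "n = length ws"
  define na where "na = length (?pos [a])"
  define nb where "nb = na + length (?pos [b - a])"
  have sum_take: "(\<Sum>i<k. ws ! i) = sum_list (take k ws)" if "k \<le> n" for k
    using that by (simp add: n_def sum_list_sum_nth lessThan_atLeast0 min_def)
  have "\<forall>x\<in>set ws. 0 < x"
    by (simp add: ws_def)
  then have w_pos: "\<forall>i<n. 0 < ws ! i"
    unfolding n_def using nth_mem by blast
  have sums: "(\<Sum>i<n. ws ! i) = 1" "(\<Sum>i<na. ws ! i) = a" "(\<Sum>i<nb. ws ! i) = b"
    using ab by (simp_all add: sum_take n_def na_def nb_def ws_def)
  obtain R f where R: "R \<in> MM" "bij_betw f {..<n} (outcomes R)" "\<forall>i<n. weight R {f i} = ws ! i"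
    using \<open>rich MM\<close> w_pos sums(1) unfolding rich_def by blast
  have "na \<le> nb" "nb \<le> n"
    by (simp_all add: na_def nb_def n_def ws_def)
  then have weights: "weight R (f ` I) = (\<Sum>i\<in>I. ws ! i)" if "I \<subseteq> {..<n}" for I
    using weight_image_of_rich_witness[OF _ R(2) w_pos sums(1) R(3) that] MM R(1) by blast
  show ?thesis
  proof (rule that)
    show "R \<in> MM"
      by (fact R(1))
    show "f ` {..<na} \<subseteq> f ` {..<nb}" "f ` {..<nb} \<subseteq> outcomes R"
      using \<open>na \<le> nb\<close> \<open>nb \<le> n\<close> R(2) by (auto simp: bij_betw_def)
    show "weight R (f ` {..<na}) = a" "weight R (f ` {..<nb}) = b"
      using weights[of "{..<na}"] weights[of "{..<nb}"] sums \<open>na \<le> nb\<close> \<open>nb \<le> n\<close> by auto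
    have "f ` {..<nb} - f ` {..<na} = f ` ({..<nb} - {..<na})"
      using \<open>na \<le> nb\<close> \<open>nb \<le> n\<close> R(2)
      by (intro inj_on_image_set_diff[symmetric]) (auto simp: bij_betw_def)
    moreover have "(\<Sum>i\<in>{..<nb} - {..<na}. ws ! i) = b - a"
      using sums(2,3) \<open>na \<le> nb\<close> sum_diff[of "{..<nb}" "{..<na}" "(!) ws"] by simp
    moreover have "{..<nb} - {..<na} \<subseteq> {..<n}"
      using \<open>nb \<le> n\<close> by auto
    ultimately show "weight R (f ` {..<nb} - f ` {..<na}) = b - a"
      using weights by simp
  qed
qed

section \<open>Likelihood orderings that are minimally rational and satisfy equivalence\<close>

lemma represents_le_iff:
  "represents MM ge Pr \<Longrightarrow> M \<in> MM \<Longrightarrow> N \<in> MM \<Longrightarrow> E \<subseteq> outcomes M \<Longrightarrow> F \<subseteq> outcomes N \<Longrightarrow>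
    Pr F N \<le> Pr E M \<longleftrightarrow> ge E M F N"
  by (simp add: represents_def)

lemma represents_Un:
  "represents MM ge Pr \<Longrightarrow> M \<in> MM \<Longrightarrow> E \<subseteq> outcomes M \<Longrightarrow> F \<subseteq> outcomes M \<Longrightarrow> E \<inter> F = {} \<Longrightarrow>
    Pr (E \<union> F) M = Pr E M + Pr F M"
  by (simp add: represents_def)

lemma represents_outcomes: "represents MM ge Pr \<Longrightarrow> M \<in> MM \<Longrightarrow> Pr (outcomes M) M = 1"
  by (simp add: represents_def)

locale rational_likelihood =
  fixes MM :: "('h::{cinner_space,complete_space}, 's) qmeas set"
    and ge :: "('h, 's) lordering"
  assumes quantum: "\<forall>M\<in>MM. quantum_measurement M"
    and rich: "rich MM"
    and minimally_rational: "minimally_rational MM ge"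
    and equivalence: "satisfies_equivalence MM ge"
begin

lemma measurement_quantum: "M \<in> MM \<Longrightarrow> quantum_measurement M"
  using quantum by blast

lemma ge_trans:
  assumes "M \<in> MM" "N \<in> MM" "K \<in> MM"
    and "E \<subseteq> outcomes M" "F \<subseteq> outcomes N" "G \<subseteq> outcomes K"
    and "ge E M F N" "ge F N G K"
  shows "ge E M G K"
proof -
  have "\<forall>M\<in>MM. \<forall>N\<in>MM. \<forall>K\<in>MM. \<forall>E F G. E \<subseteq> outcomes M \<and> F \<subseteq> outcomes N \<and>
      G \<subseteq> outcomes K \<and> ge E M F N \<and> ge F N G K \<longrightarrow> ge E M G K"
    using minimally_rational unfolding minimally_rational_def by (rule conjunct1)
  then show ?thesis
    using assms by blast
qed

lemma lsim_trans:
  assumes "M \<in> MM" "N \<in> MM" "K \<in> MM"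
    and "E \<subseteq> outcomes M" "F \<subseteq> outcomes N" "G \<subseteq> outcomes K"
    and "lsim ge E M F N" "lsim ge F N G K"
  shows "lsim ge E M G K"
  using assms ge_trans unfolding lsim_def by blast

lemma separation: "\<exists>M\<in>MM. \<exists>E. E \<subseteq> outcomes M \<and> \<not> lnull ge E M"
  using minimally_rational unfolding minimally_rational_def by blast

lemma ge_subset: "M \<in> MM \<Longrightarrow> E \<subseteq> F \<Longrightarrow> F \<subseteq> outcomes M \<Longrightarrow> ge F M E M"
  using minimally_rational unfolding minimally_rational_def by blast

lemma lsim_subset_iff:
  "M \<in> MM \<Longrightarrow> E \<subseteq> F \<Longrightarrow> F \<subseteq> outcomes M \<Longrightarrow> lsim ge F M E M \<longleftrightarrow> lnull ge (F - E) M"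
  using minimally_rational unfolding minimally_rational_def by blast

lemma lsim_if_weight_eq:
  "M \<in> MM \<Longrightarrow> N \<in> MM \<Longrightarrow> E \<subseteq> outcomes M \<Longrightarrow> F \<subseteq> outcomes N \<Longrightarrow>
    weight M E = weight N F \<Longrightarrow> lsim ge E M F N"
  using equivalence unfolding satisfies_equivalence_def by blast

lemma nested_events:
  assumes "0 \<le> a" "a \<le> b" "b \<le> 1"
  obtains R A B where "R \<in> MM" "A \<subseteq> B" "B \<subseteq> outcomes R"
    "weight R A = a" "weight R B = b" "weight R (B - A) = b - a"
  by (rule rich_nested_events[OF quantum rich assms])

lemma lnull_subset:
  assumes "M \<in> MM" "E \<subseteq> F" "F \<subseteq> outcomes M" "lnull ge F M"
  shows "lnull ge E M"
proof -
  have "ge E M {} M"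
    using assms by (intro ge_subset) auto
  moreover have "ge {} M E M"
    using assms ge_trans[of M M M "{}" F E] ge_subset[of M E F]
    unfolding lnull_def lsim_def by blast
  ultimately show ?thesis
    by (simp add: lnull_def lsim_def)
qed

lemma lnull_if_lsim_lnull:
  assumes "M \<in> MM" "N \<in> MM" "E \<subseteq> outcomes M" "F \<subseteq> outcomes N"
    and "lsim ge E M F N" "lnull ge F N"
  shows "lnull ge E M"
proof -
  have "lsim ge {} N {} M"
    using assms(1,2) by (intro lsim_if_weight_eq) auto
  moreover have "lsim ge E M {} N"
    using assms lsim_trans[of M N N E F "{}"] unfolding lnull_def by blast
  ultimately show ?thesis
    using assms lsim_trans[of M N M E "{}" "{}"] unfolding lnull_def by blast
qed

text \<open>Null weights are closed under halving and under doubling (an event of weight \<open>2 a\<close> splits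
  into two null events of weight \<open>a\<close>), so a positive null weight would make the set of all
  outcomes null, contradicting separation.\<close>

definition null_weight :: "real \<Rightarrow> bool" where
  "null_weight v \<longleftrightarrow> (\<forall>R\<in>MM. \<forall>A. A \<subseteq> outcomes R \<and> weight R A = v \<longrightarrow> lnull ge A R)"

lemma null_weightI:
  assumes "R \<in> MM" "A \<subseteq> outcomes R" "lnull ge A R"
  shows "null_weight (weight R A)"
  unfolding null_weight_def
proof (intro ballI allI impI)
  fix R' A'
  assume "R' \<in> MM" "A' \<subseteq> outcomes R' \<and> weight R' A' = weight R A"
  then show "lnull ge A' R'"
    using lnull_if_lsim_lnull[OF _ assms(1) _ assms(2) lsim_if_weight_eq assms(3)] assms(1,2)
    by blast
qed

lemma lnull_if_null_weight:
  "null_weight v \<Longrightarrow> R \<in> MM \<Longrightarrow> A \<subseteq> outcomes R \<Longrightarrow> weight R A = v \<Longrightarrow> lnull ge A R"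
  by (simp add: null_weight_def)

lemma null_weight_le:
  assumes "null_weight b" "0 \<le> a" "a \<le> b" "b \<le> 1"
  shows "null_weight a"
proof -
  obtain R A B where R: "R \<in> MM" "A \<subseteq> B" "B \<subseteq> outcomes R"
    "weight R A = a" "weight R B = b" "weight R (B - A) = b - a"
    by (rule nested_events[OF assms(2-4)])
  then have "lnull ge A R"
    using lnull_subset[OF R(1-3) lnull_if_null_weight[OF assms(1) R(1,3,5)]] by blast
  moreover have "A \<subseteq> outcomes R"
    using R(2,3) by blast
  ultimately show ?thesis
    using null_weightI[OF R(1)] R(4) by blast
qed

lemma null_weight_double:
  assumes "null_weight a" "0 \<le> a" "2 * a \<le> 1"
  shows "null_weight (2 * a)"
proof -
  have "a \<le> 2 * a"
    using assms(2) by simp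
  then obtain R A B where R: "R \<in> MM" "A \<subseteq> B" "B \<subseteq> outcomes R"
    "weight R A = a" "weight R B = 2 * a" "weight R (B - A) = 2 * a - a"
    by (rule nested_events[OF assms(2) _ assms(3)])
  moreover have "A \<subseteq> outcomes R" "B - A \<subseteq> outcomes R"
    using R(2,3) by auto
  ultimately have "lnull ge A R" "lnull ge (B - A) R"
    using lnull_if_null_weight[OF assms(1)] by auto
  then have "lsim ge B R A R" "lsim ge A R {} R"
    using lsim_subset_iff[OF R(1-3)] by (simp_all add: lnull_def)
  then have "lnull ge B R"
    using lsim_trans[OF R(1) R(1) R(1) R(3) \<open>A \<subseteq> outcomes R\<close>] by (simp add: lnull_def)
  then show ?thesis
    using null_weightI[OF R(1,3)] R(5) by simp
qed

lemma not_null_weight_1: "\<not> null_weight 1"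
proof
  assume "null_weight 1"
  obtain M E where "M \<in> MM" "E \<subseteq> outcomes M" "\<not> lnull ge E M"
    using separation by blast
  moreover have "lnull ge (outcomes M) M"
    using lnull_if_null_weight[OF \<open>null_weight 1\<close> \<open>M \<in> MM\<close>]
      weight_outcomes[OF measurement_quantum[OF \<open>M \<in> MM\<close>]] by simp
  ultimately show False
    using lnull_subset by blast
qed

lemma weight_eq_0_if_lnull:
  assumes "M \<in> MM" "E \<subseteq> outcomes M" "lnull ge E M"
  shows "weight M E = 0"
proof (rule ccontr)
  let ?w = "weight M E"
  assume "?w \<noteq> 0"
  have "0 < ?w" "?w \<le> 1"
    using \<open>?w \<noteq> 0\<close> weight_nonneg[OF measurement_quantum[OF assms(1)], of E]
      weight_le_1[OF measurement_quantum[OF assms(1)] assms(2)] by simp_all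
  define c where "c k = min 1 (2 ^ k * ?w)" for k :: nat
  have "null_weight (c k)" for k
  proof (induction k)
    case 0
    have "c 0 = ?w"
      using \<open>?w \<le> 1\<close> by (simp add: c_def)
    then show ?case
      using null_weightI[OF assms] by simp
  next
    case (Suc k)
    show ?case
    proof (cases "2 ^ Suc k * ?w \<le> 1")
      case True
      then have "c k = 2 ^ k * ?w" "c (Suc k) = 2 * (2 ^ k * ?w)"
        using \<open>0 < ?w\<close> by (simp_all add: c_def)
      then show ?thesis
        using null_weight_double[of "2 ^ k * ?w"] Suc.IH True \<open>0 < ?w\<close> by simp
    next
      case False
      then have "1 / 2 \<le> c k" "c k \<le> 1" "c (Suc k) = 1"
        by (simp_all add: c_def)
      then have "null_weight (1 / 2)"
        using null_weight_le[OF Suc.IH] by simp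
      then show ?thesis
        using null_weight_double[of "1 / 2"] \<open>c (Suc k) = 1\<close> by simp
    qed
  qed
  moreover obtain k where "1 / ?w < 2 ^ k"
    using real_arch_pow[of 2 "1 / ?w"] by auto
  then have "c k = 1"
    using \<open>0 < ?w\<close> by (simp add: c_def divide_less_eq)
  ultimately show False
    using not_null_weight_1 by metis
qed

text \<open>Weights are additive only because two outcomes sharing an eigenvalue are forced to be null:
  \<open>{a, b}\<close> and \<open>{a}\<close> have the same weight.\<close>

lemma weight_Un_disjoint:
  assumes M: "M \<in> MM" and EF: "E \<subseteq> outcomes M" "F \<subseteq> outcomes M" "E \<inter> F = {}"
  shows "weight M (E \<union> F) = weight M E + weight M F"
proof (rule weight_Un_disjoint_if_shared_null)
  show "quantum_measurement M"
    using measurement_quantum[OF M] .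
  fix x
  assume "x \<in> cg M ` E \<inter> cg M ` F"
  then obtain a b where ab: "a \<in> E" "b \<in> F" "cg M a = x" "cg M b = x"
    by (metis IntD1 IntD2 imageE)
  then have sub: "{a} \<subseteq> {a, b}" "{a, b} \<subseteq> outcomes M" "{b} \<subseteq> outcomes M"
    using EF by auto
  have "weight M {a, b} = weight M {a}"
    using ab by (simp add: weight_eq_infsum)
  then have "lsim ge {a, b} M {a} M"
    using lsim_if_weight_eq[OF M M sub(2)] sub by blast
  moreover have "{a, b} - {a} = {b}"
    using ab EF(3) by blast
  ultimately have "lnull ge {b} M"
    using lsim_subset_iff[OF M sub(1,2)] by simp
  then have "weight M {b} = 0"
    using weight_eq_0_if_lnull[OF M sub(3)] by blast
  then show "spectral_weight M x = 0"
    using ab by (simp add: weight_singleton)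
qed

lemma ge_iff_weight_le:
  assumes M: "M \<in> MM" and N: "N \<in> MM" and E: "E \<subseteq> outcomes M" and F: "F \<subseteq> outcomes N"
  shows "ge E M F N \<longleftrightarrow> weight N F \<le> weight M E"
proof
  have bounds: "0 \<le> weight M E" "weight N F \<le> 1"
    using weight_nonneg[OF measurement_quantum[OF M]] weight_le_1[OF measurement_quantum[OF N] F]
    by simp_all
  assume ge: "ge E M F N"
  show "weight N F \<le> weight M E"
  proof (rule ccontr)
    assume "\<not> weight N F \<le> weight M E"
    then have "weight M E \<le> weight N F"
      by simp
    obtain R A B where R: "R \<in> MM" "A \<subseteq> B" "B \<subseteq> outcomes R"
      "weight R A = weight M E" "weight R B = weight N F"
      "weight R (B - A) = weight N F - weight M E"
      by (rule nested_events[OF bounds(1) \<open>weight M E \<le> weight N F\<close> bounds(2)])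
    have A: "A \<subseteq> outcomes R"
      using R(2,3) by blast
    have "ge A R E M" "ge F N B R"
      using lsim_if_weight_eq[OF R(1) M A E] lsim_if_weight_eq[OF N R(1) F R(3)] R(4,5)
      by (simp_all add: lsim_def)
    then have "ge A R B R"
      using ge ge_trans[OF R(1) M N A E F] ge_trans[OF R(1) N R(1) A F R(3)] by blast
    then have "lsim ge B R A R"
      using ge_subset[OF R(1-3)] by (simp add: lsim_def)
    then have "weight R (B - A) = 0"
      using lsim_subset_iff[OF R(1-3)] weight_eq_0_if_lnull[OF R(1)] R(3) by blast
    with R(6) \<open>\<not> weight N F \<le> weight M E\<close> show False
      by simp
  qed
next
  have bounds: "0 \<le> weight N F" "weight M E \<le> 1"
    using weight_nonneg[OF measurement_quantum[OF N]] weight_le_1[OF measurement_quantum[OF M] E]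
    by simp_all
  assume "weight N F \<le> weight M E"
  obtain R A B where R: "R \<in> MM" "A \<subseteq> B" "B \<subseteq> outcomes R"
    "weight R A = weight N F" "weight R B = weight M E"
    "weight R (B - A) = weight M E - weight N F"
    by (rule nested_events[OF bounds(1) \<open>weight N F \<le> weight M E\<close> bounds(2)])
  have A: "A \<subseteq> outcomes R"
    using R(2,3) by blast
  have "ge E M B R" "ge A R F N"
    using lsim_if_weight_eq[OF M R(1) E R(3)] lsim_if_weight_eq[OF R(1) N A F] R(4,5)
    by (simp_all add: lsim_def)
  then show "ge E M F N"
    using ge_subset[OF R(1-3)] ge_trans[OF M R(1) R(1) E R(3) A] ge_trans[OF M R(1) N E A F]
    by blast
qed

lemma represents_weight: "represents MM ge (\<lambda>E M. weight M E)"
  unfolding represents_def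
proof (intro conjI ballI allI impI)
  fix M
  assume "M \<in> MM"
  then show "weight M {} = 0" "weight M (outcomes M) = 1"
    using weight_outcomes[OF measurement_quantum] by simp_all
next
  fix M E F
  assume "M \<in> MM" "E \<subseteq> outcomes M \<and> F \<subseteq> outcomes M \<and> E \<inter> F = {}"
  then show "weight M (E \<union> F) = weight M E + weight M F"
    using weight_Un_disjoint by blast
next
  fix M N E F
  assume "M \<in> MM" "N \<in> MM" "E \<subseteq> outcomes M \<and> F \<subseteq> outcomes N"
  then show "weight N F \<le> weight M E \<longleftrightarrow> ge E M F N"
    using ge_iff_weight_le by blast
qed

lemma represents_le_iff_weight_le:
  assumes "represents MM ge Pr" "R \<in> MM" "K \<in> MM" "A \<subseteq> outcomes R" "B \<subseteq> outcomes K"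
  shows "Pr A R \<le> Pr B K \<longleftrightarrow> weight R A \<le> weight K B"
  using represents_le_iff[OF assms(1,3,2,5,4)] ge_iff_weight_le[OF assms(3,2,5,4)] by simp

lemma represents_factors_through_weight:
  assumes Pr: "represents MM ge Pr"
  obtains \<phi> where "\<And>R A. R \<in> MM \<Longrightarrow> A \<subseteq> outcomes R \<Longrightarrow> Pr A R = \<phi> (weight R A)"
proof -
  define event where
    "event t = (SOME p. fst p \<in> MM \<and> snd p \<subseteq> outcomes (fst p) \<and> weight (fst p) (snd p) = t)" for t
  have "Pr A R = Pr (snd (event (weight R A))) (fst (event (weight R A)))"
    if "R \<in> MM" "A \<subseteq> outcomes R" for R A
  proof -
    let ?t = "weight R A"
    have "\<exists>p. fst p \<in> MM \<and> snd p \<subseteq> outcomes (fst p) \<and> weight (fst p) (snd p) = ?t"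
      using that by (intro exI[of _ "(R, A)"]) simp
    then have "fst (event ?t) \<in> MM \<and> snd (event ?t) \<subseteq> outcomes (fst (event ?t)) \<and>
        weight (fst (event ?t)) (snd (event ?t)) = ?t"
      unfolding event_def by (rule someI_ex)
    then show ?thesis
      using represents_le_iff_weight_le[OF Pr, of "fst (event ?t)" R "snd (event ?t)" A]
        represents_le_iff_weight_le[OF Pr, of R "fst (event ?t)" A "snd (event ?t)"] that
      by auto
  qed
  then show ?thesis
    by (rule that)
qed

text \<open>By the nested events, the function of the weight through which a representation factors is
  monotone and additive on \<open>[0, 1]\<close>, hence the identity.\<close>

lemma representation_unique:
  assumes Pr: "represents MM ge Pr" and M: "M \<in> MM" and E: "E \<subseteq> outcomes M"
  shows "Pr E M = weight M E"
proof -
  obtain \<phi> where Pr_eq: "\<And>R A. R \<in> MM \<Longrightarrow> A \<subseteq> outcomes R \<Longrightarrow> Pr A R = \<phi> (weight R A)"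
    using represents_factors_through_weight[OF Pr] by blast
  have \<phi>_id: "\<phi> t = t" if "0 \<le> t" "t \<le> 1" for t
  proof (rule monotone_additive_unit_interval_eq_id[OF _ _ _ that])
    fix a b :: real
    assume "0 \<le> a" "0 \<le> b" "a + b \<le> 1"
    then have "a \<le> a + b"
      by simp
    then obtain R A B where R: "R \<in> MM" "A \<subseteq> B" "B \<subseteq> outcomes R"
      "weight R A = a" "weight R B = a + b" "weight R (B - A) = a + b - a"
      by (rule nested_events[OF \<open>0 \<le> a\<close> _ \<open>a + b \<le> 1\<close>])
    have sub: "A \<subseteq> outcomes R" "B - A \<subseteq> outcomes R"
      using R(2,3) by auto
    have "Pr B R = Pr (A \<union> (B - A)) R"
      using R(2) by (simp add: Un_absorb1)
    also have "\<dots> = Pr A R + Pr (B - A) R"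
      using represents_Un[OF Pr R(1) sub] by simp
    finally show "\<phi> (a + b) = \<phi> a + \<phi> b"
      using Pr_eq[OF R(1) R(3)] Pr_eq[OF R(1) sub(1)] Pr_eq[OF R(1) sub(2)] R(4-6) by simp
  next
    fix a b :: real
    assume "0 \<le> a" "a \<le> b" "b \<le> 1"
    then obtain R A B where R: "R \<in> MM" "A \<subseteq> B" "B \<subseteq> outcomes R"
      "weight R A = a" "weight R B = b" "weight R (B - A) = b - a"
      by (rule nested_events)
    then have A: "A \<subseteq> outcomes R"
      by blast
    then show "\<phi> a \<le> \<phi> b"
      using represents_le_iff_weight_le[OF Pr R(1) R(1) A R(3)] Pr_eq[OF R(1) A] Pr_eq[OF R(1) R(3)]
        R(4,5) \<open>a \<le> b\<close>
      by simp
  next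
    obtain N where "N \<in> MM"
      using separation by blast
    then show "\<phi> 1 = 1"
      using represents_outcomes[OF Pr] Pr_eq[of N "outcomes N"]
        weight_outcomes[OF measurement_quantum] by simp
  qed
  show ?thesis
    using \<phi>_id[OF weight_nonneg weight_le_1[OF _ E]] Pr_eq[OF M E] measurement_quantum[OF M]
    by simp
qed

end

theorem mainTheorem1:
  fixes MM :: "('h::{cinner_space,complete_space}, 's) qmeas set"
    and ge :: "('h, 's) lordering"
  assumes "\<forall>M\<in>MM. quantum_measurement M"
    and "rich MM"
    and "minimally_rational MM ge"
    and "satisfies_equivalence MM ge"
  shows "uniquely_represents MM ge (\<lambda>E M. weight M E)"
proof -
  interpret rational_likelihood MM ge
    using assms by unfold_locales
  show ?thesis
    unfolding uniquely_represents_def using represents_weight representation_unique by blast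
qed

end
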